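(* For all $n \geq 0$: $$\sum_{k:\, a(k) \leq n} a(k) = \begin{cases} \frac{n^2}{4} - \frac{n}{4} + n\,t(n) & \text{if } n \equiv 0 \pmod 4,\\ \frac{n^2}{4} + \frac{n}{4} - \frac12 + t(n) & \text{if } n \equiv 1 \pmod 4,\\ \frac{n^2}{4} - \frac{n}{4} - \frac12 + (n+1)t(n) & \text{if } n \equiv 2 \pmod 4,\\ \frac{n^2}{4} + \frac{n}{4} & \text{if } n \equiv 3 \pmod 4,\end{cases}$$ $$\sum_{k:\, b(k) \leq n} b(k) = \begin{cases} \frac{n^2}{4} + \frac{3n}{4} - n\,t(n) & \text{if } n \equiv 0 \pmod 4,\\ \frac{n^2}{4} + \frac{n}{4} + \frac12 - t(n) & \text{if } n \equiv 1 \pmod 4,\\ \frac{n^2}{4} + \frac{3n}{4} + \frac12 - (n+1)t(n) & \text{if } n \equiv 2 \pmod 4,\\ \frac{n^2}{4} + \frac{n}{4} & \text{if } n \equiv 3 \pmod 4.\end{cases}$$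
   Context: The Thue–Morse sequence $(t(n))_{n\geq 0}$ is defined by $t(0)=0$, $t(2n)=t(n)$, $t(2n+1)=1-t(n)$. A nonnegative integer is odious if the sum of its binary digits is odd and evil if it is even. $(a(n))_{n\geq0}$ is the increasing sequence of odious numbers and $(b(n))_{n\geq 0}$ the increasing sequence of evil numbers, both indexed from $0$ (so $a(0)=1, a(1)=2,\ldots$ and $b(0)=0, b(1)=3, \ldots$). *)

theory Defs
  imports Complex_Main "HOL-Library.Infinite_Set"
begin

fun tm :: "nat \<Rightarrow> nat" where
  "tm n = (if n = 0 then 0 else if even n then tm (n div 2) else 1 - tm (n div 2))"

fun bitsum :: "nat \<Rightarrow> nat" where
  "bitsum n = (if n = 0 then 0 else n mod 2 + bitsum (n div 2))"

definition odious :: "nat \<Rightarrow> bool" where "odious n \<longleftrightarrow> odd (bitsum n)"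
definition evil :: "nat \<Rightarrow> bool" where "evil n \<longleftrightarrow> even (bitsum n)"

text \<open>a(k), b(k): increasing enumerations (indexed from 0) of odious / evil numbers.\<close>
definition oa :: "nat \<Rightarrow> nat" where "oa = enumerate {m. odious m}"
definition eb :: "nat \<Rightarrow> nat" where "eb = enumerate {m. evil m}"

end

theory Submission
  imports Defs
begin

text \<open>
  In every block \<open>{4j, 4j+1, 4j+2, 4j+3}\<close> the Thue--Morse values are
  \<open>t(j), 1-t(j), 1-t(j), t(j)\<close>, so exactly two of the four numbers are odious and
  their sum is \<open>8j+3\<close> whatever \<open>t(j)\<close> is. Hence the odious numbers below \<open>4j\<close>
  sum to \<open>4j\<^sup>2 - j\<close>; the at most three further terms of an incomplete block give the
  four cases, and the evil sum is the complement in \<open>0 + 1 + \<dots> + n\<close>.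
\<close>

lemma sum_enumerate_atMost:
  fixes S :: "nat set"
  assumes "infinite S"
  shows "(\<Sum>k\<in>{k. enumerate S k \<le> n}. enumerate S k) = (\<Sum>m\<in>{m\<in>S. m \<le> n}. m)"
proof (rule sum.reindex_bij_betw)
  have "enumerate S ` {k. enumerate S k \<le> n} = {m\<in>S. m \<le> n}"
    using enumerate_in_set[OF assms] enumerate_Ex[OF assms] by blast
  then show "bij_betw (enumerate S) {k. enumerate S k \<le> n} {m\<in>S. m \<le> n}"
    using inj_on_subset[OF inj_enumerate[OF assms]] by (simp add: bij_betw_def)
qed

(* the defining equations recurse under an if and would make the simplifier loop *)
declare tm.simps [simp del] bitsum.simps [simp del]

lemma tm_0 [simp]: "tm 0 = 0"
  by (subst tm.simps) simp

lemma tm_double: "tm (2 * n) = tm n"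
  by (subst tm.simps) simp

lemma tm_Suc_double: "tm (2 * n + 1) = 1 - tm n"
  by (subst tm.simps) simp

lemma tm_eq_bitsum_mod_2: "tm n = bitsum n mod 2"
proof (induction n rule: tm.induct)
  case (1 n)
  show ?case
  proof (cases "n = 0")
    case True
    then show ?thesis
      by (simp add: bitsum.simps)
  next
    case False
    have tm_n: "tm n = (if even n then tm (n div 2) else 1 - tm (n div 2))"
      using False by (subst tm.simps) simp
    have bitsum_n: "bitsum n = n mod 2 + bitsum (n div 2)"
      using False by (subst bitsum.simps) simp
    have "(1 + b) mod 2 = 1 - b mod 2" for b :: nat
      by (cases "even b") (simp_all add: even_iff_mod_2_eq_zero odd_iff_mod_2_eq_one mod_Suc)
    then show ?thesis
      using 1 False tm_n bitsum_n by (auto simp: odd_iff_mod_2_eq_one)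
  qed
qed

lemma tm_le_1: "tm n \<le> 1"
  by (simp add: tm_eq_bitsum_mod_2)

lemma odious_iff_tm: "odious n \<longleftrightarrow> tm n = 1"
  by (simp add: odious_def tm_eq_bitsum_mod_2 odd_iff_mod_2_eq_one)

lemma evil_iff_tm: "evil n \<longleftrightarrow> tm n = 0"
  by (simp add: evil_def tm_eq_bitsum_mod_2 even_iff_mod_2_eq_zero)

lemma infinite_tm_eq:
  assumes "v \<le> 1"
  shows "infinite {m. tm m = v}"
  unfolding infinite_nat_iff_unbounded_le
proof
  fix k
  have "tm (2 * k) = v \<or> tm (2 * k + 1) = v"
    using assms tm_le_1[of k] tm_double[of k] tm_Suc_double[of k] by auto
  then obtain m where "m \<in> {2 * k, 2 * k + 1}" and "tm m = v"
    by blast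
  moreover from this(1) have "k \<le> m"
    by auto
  ultimately show "\<exists>m\<ge>k. m \<in> {m. tm m = v}"
    by blast
qed

lemma tm_mult_4_add:
  "tm (4 * j) = tm j" "tm (4 * j + 1) = 1 - tm j" "tm (4 * j + 2) = 1 - tm j" "tm (4 * j + 3) = tm j"
proof -
  have "4 * j = 2 * (2 * j)" "4 * j + 1 = 2 * (2 * j) + 1"
       "4 * j + 2 = 2 * (2 * j + 1)" "4 * j + 3 = 2 * (2 * j + 1) + 1"
    by simp_all
  then show "tm (4 * j) = tm j" "tm (4 * j + 1) = 1 - tm j" "tm (4 * j + 2) = 1 - tm j" "tm (4 * j + 3) = tm j"
    using tm_le_1[of j] by (simp_all only: tm_double tm_Suc_double)
qed

lemma sum_odious_atMost: "(\<Sum>k\<in>{k. oa k \<le> n}. oa k) = (\<Sum>m\<le>n. m * tm m)"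
proof -
  have "(\<Sum>k\<in>{k. oa k \<le> n}. oa k) = (\<Sum>m\<in>{m\<in>{m. tm m = 1}. m \<le> n}. m)"
    unfolding oa_def odious_iff_tm by (rule sum_enumerate_atMost[OF infinite_tm_eq]) simp
  also have "\<dots> = (\<Sum>m\<le>n. if tm m = 1 then m else 0)"
    by (simp add: sum.inter_filter[symmetric] conj_commute)
  also have "\<dots> = (\<Sum>m\<le>n. m * tm m)"
  proof (rule sum.cong[OF refl])
    fix m
    show "(if tm m = 1 then m else 0) = m * tm m"
      using tm_le_1[of m] by (auto simp: le_Suc_eq)
  qed
  finally show ?thesis .
qed

lemma sum_evil_atMost: "(\<Sum>k\<in>{k. eb k \<le> n}. eb k) = (\<Sum>m\<le>n. m * (1 - tm m))"
proof -
  have "(\<Sum>k\<in>{k. eb k \<le> n}. eb k) = (\<Sum>m\<in>{m\<in>{m. tm m = 0}. m \<le> n}. m)"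
    unfolding eb_def evil_iff_tm by (rule sum_enumerate_atMost[OF infinite_tm_eq]) simp
  also have "\<dots> = (\<Sum>m\<le>n. if tm m = 0 then m else 0)"
    by (simp add: sum.inter_filter[symmetric] conj_commute)
  also have "\<dots> = (\<Sum>m\<le>n. m * (1 - tm m))"
  proof (rule sum.cong[OF refl])
    fix m
    show "(if tm m = 0 then m else 0) = m * (1 - tm m)"
      using tm_le_1[of m] by (auto simp: le_Suc_eq)
  qed
  finally show ?thesis .
qed

lemma sum_evil_plus_sum_odious:
  "(\<Sum>k\<in>{k. eb k \<le> n}. eb k) + (\<Sum>k\<in>{k. oa k \<le> n}. oa k) = (\<Sum>m\<le>n. m)"
proof -
  have "m * (1 - tm m) + m * tm m = m" for m
    using tm_le_1[of m] by (auto simp: le_Suc_eq)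
  then show ?thesis
    unfolding sum_evil_atMost sum_odious_atMost sum.distrib[symmetric] by simp
qed

lemma sum_mult_tm_atMost_mult_4_add:
  "(\<Sum>m\<le>4 * j. m * tm m) = (\<Sum>m<4 * j. m * tm m) + 4 * j * tm j"
  "(\<Sum>m\<le>4 * j + 1. m * tm m) = (\<Sum>m<4 * j. m * tm m) + 4 * j * tm j + (4 * j + 1) * (1 - tm j)"
  "(\<Sum>m\<le>4 * j + 2. m * tm m) = (\<Sum>m<4 * j. m * tm m) + 4 * j * tm j + (8 * j + 3) * (1 - tm j)"
  "(\<Sum>m\<le>4 * j + 3. m * tm m) = (\<Sum>m<4 * j. m * tm m) + (8 * j + 3)"
  using tm_le_1[of j] tm_mult_4_add[of j]
  by (auto simp: lessThan_Suc_atMost[symmetric] le_Suc_eq algebra_simps)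
     (auto simp: lessThan_Suc_atMost[symmetric] le_Suc_eq numeral_eq_Suc)

lemma sum_mult_tm_lessThan_mult_4: "real (\<Sum>m<4 * j. m * tm m) = 4 * real j ^ 2 - real j"
proof (induction j)
  case (Suc j)
  have next_block: "(\<Sum>m<4 * Suc j. m * tm m) = (\<Sum>m\<le>4 * j + 3. m * tm m)"
    by (simp add: lessThan_Suc_atMost[symmetric])
  show ?case
    unfolding next_block sum_mult_tm_atMost_mult_4_add of_nat_add Suc.IH
    by (simp add: power2_eq_square algebra_simps)
qed simp

lemma sum_mult_tm_atMost:
  "real (\<Sum>m\<le>n. m * tm m) =
     (if n mod 4 = 0 then real n ^ 2 / 4 - real n / 4 + real n * real (tm n)
      else if n mod 4 = 1 then real n ^ 2 / 4 + real n / 4 - 1/2 + real (tm n)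
      else if n mod 4 = 2 then real n ^ 2 / 4 - real n / 4 - 1/2 + (real n + 1) * real (tm n)
      else real n ^ 2 / 4 + real n / 4)"
proof -
  define j where "j = n div 4"
  have block: "real (\<Sum>m<4 * j. m * tm m) = 4 * real j ^ 2 - real j"
    by (rule sum_mult_tm_lessThan_mult_4)
  have flip: "real (1 - tm j) = 1 - real (tm j)"
    using tm_le_1[of j] by (simp add: of_nat_diff)
  have "n mod 4 = 0 \<or> n mod 4 = 1 \<or> n mod 4 = 2 \<or> n mod 4 = 3"
    by auto
  then show ?thesis
  proof (elim disjE)
    assume r: "n mod 4 = 0"
    then have n: "n = 4 * j"
      unfolding j_def by presburger
    have "real (\<Sum>m\<le>n. m * tm m) = real n ^ 2 / 4 - real n / 4 + real n * real (tm n)"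
      unfolding n sum_mult_tm_atMost_mult_4_add of_nat_add of_nat_mult block tm_mult_4_add flip
      by (simp add: power2_eq_square field_simps)
    with r show ?thesis
      by simp
  next
    assume r: "n mod 4 = 1"
    then have n: "n = 4 * j + 1"
      unfolding j_def by presburger
    have "real (\<Sum>m\<le>n. m * tm m) = real n ^ 2 / 4 + real n / 4 - 1/2 + real (tm n)"
      unfolding n sum_mult_tm_atMost_mult_4_add of_nat_add of_nat_mult block tm_mult_4_add flip
      by (simp add: power2_eq_square field_simps)
    with r show ?thesis
      by simp
  next
    assume r: "n mod 4 = 2"
    then have n: "n = 4 * j + 2"
      unfolding j_def by presburger
    have "real (\<Sum>m\<le>n. m * tm m) = real n ^ 2 / 4 - real n / 4 - 1/2 + (real n + 1) * real (tm n)"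
      unfolding n sum_mult_tm_atMost_mult_4_add of_nat_add of_nat_mult block tm_mult_4_add flip
      by (simp add: power2_eq_square field_simps)
    with r show ?thesis
      by simp
  next
    assume r: "n mod 4 = 3"
    then have n: "n = 4 * j + 3"
      unfolding j_def by presburger
    have "real (\<Sum>m\<le>n. m * tm m) = real n ^ 2 / 4 + real n / 4"
      unfolding n sum_mult_tm_atMost_mult_4_add of_nat_add of_nat_mult block tm_mult_4_add flip
      by (simp add: power2_eq_square field_simps)
    with r show ?thesis
      by simp
  qed
qed

theorem corollary2:
  fixes n :: nat
  shows "real (\<Sum>k\<in>{k. oa k \<le> n}. oa k) =
     (if n mod 4 = 0 then real n ^ 2 / 4 - real n / 4 + real n * real (tm n)
      else if n mod 4 = 1 then real n ^ 2 / 4 + real n / 4 - 1/2 + real (tm n)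
      else if n mod 4 = 2 then real n ^ 2 / 4 - real n / 4 - 1/2 + (real n + 1) * real (tm n)
      else real n ^ 2 / 4 + real n / 4)
   \<and> real (\<Sum>k\<in>{k. eb k \<le> n}. eb k) =
     (if n mod 4 = 0 then real n ^ 2 / 4 + 3 * real n / 4 - real n * real (tm n)
      else if n mod 4 = 1 then real n ^ 2 / 4 + real n / 4 + 1/2 - real (tm n)
      else if n mod 4 = 2 then real n ^ 2 / 4 + 3 * real n / 4 + 1/2 - (real n + 1) * real (tm n)
      else real n ^ 2 / 4 + real n / 4)"
proof -
  have gauss: "2 * real (\<Sum>m\<le>n. m) = real n * (real n + 1)"
    using double_gauss_sum[of n] by (simp add: atLeast0AtMost)
  have evil: "real (\<Sum>k\<in>{k. eb k \<le> n}. eb k) =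
      real n * (real n + 1) / 2 - real (\<Sum>k\<in>{k. oa k \<le> n}. oa k)"
    using gauss sum_evil_plus_sum_odious[of n, THEN arg_cong[where f = real]] by simp
  show ?thesis
    unfolding evil sum_odious_atMost sum_mult_tm_atMost
    by (auto simp: field_simps power2_eq_square)
qed

end
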